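(* Let $\mathrm A$ be a nontrivial system of Bilocal Classical Theory (BCT) and $\rho=\sum_ip_i|i)_{\mathrm A}$ a deterministic state, with $|i)_{\mathrm A}$ the pure states and $\mathbf p=(p_i)$ a probability distribution. Then for each $k=1,2,3$, \[ S_k^{\rm reg}(\rho)=S_k(\rho)+1=H(\mathbf p)+1 . \]
   Context: BCT is an operational probabilistic theory with the following structure. Systems: a trivial system and, for every integer $D>1$, exactly one system of size $D$. For a nontrivial system $\mathrm A$ of size $D_{\mathrm A}$, every state is a nonnegative combination of the $D_{\mathrm A}$ pure states $|i)_{\mathrm A}$, which are the vertices of the simplex of deterministic states and are jointly perfectly discriminable; BCT is weakly causal (unique deterministic effect per system), classical and convex. For nontrivial $\mathrm A,\mathrm B$, the composite $\mathrm{AB}$ has size $2D_{\mathrm A}D_{\mathrm B}$, with pure states $|(ij)_s)_{\mathrm{AB}}$, $s\in\{+,-\}$, and $|i)_{\mathrm A}\boxtimes|j)_{\mathrm B}=\tfrac12\sum_{s=\pm}|(ij)_s)_{\mathrm{AB}}$; for three systems $((ij)_{s_1}k)_{s_2}=(i(jk)_{s_1s_2})_{s_1}$. Consequently $\rho^{\boxtimes N}=\sum_{\mathbf i,\mathbf s}p_{i_1}\cdots p_{i_N}2^{-(N-1)}|\mathbf i_{\mathbf s})$, with $|\mathbf i_{\mathbf s})$, $\mathbf i\in\{1,\dots,D_{\mathrm A}\}^N$, $\mathbf s\in\{\pm\}^{N-1}$, the pure states of $\mathrm A^{\boxtimes N}$. Entropies: an event is atomic if every refinement of it (collection of events from a common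 test summing to it) consists of multiples of it; an atomic observation test has only atomic effects. For a deterministic state $\sigma$, let $\mathcal P(\sigma)$ be its decompositions $\sigma=\sum_ip_i\phi_i$ into pure states, and for an atomic observation test $\{a_j\}$ let $I,J$ have joint distribution $q(i,j)=p_i(a_j|\phi_i)$. $S_1(\sigma)=\inf_{\{a_j\}}H(J)$, $S_2(\sigma)=\sup_{\mathcal P(\sigma)}\sup_{\{a_j\}}H(I:J)$, $S_3(\sigma)=\inf_{\mathcal P(\sigma)}H(I)$, and $S_k^{\rm reg}(\sigma)=\limsup_{N\to\infty}S_k(\sigma^{\boxtimes N})/N$; $H$ is Shannon entropy in base 2. *)

theory Defs
  imports "HOL-Analysis.Analysis" "HOL-Library.Extended_Real"
begin

text \<open>A classical (simplicial) system whose pure states |x) are labelled by the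
elements x of a finite carrier X. A state is a function X -> real (its coordinates
in the basis of pure states); an effect is a nonnegative function on X; the pairing
(a|sigma) is the sum over x of a x * sigma x. The unique deterministic effect is the
constant 1. No-restriction: every nonnegative family summing to 1 is a test.\<close>

definition shannon :: "'b set \<Rightarrow> ('b \<Rightarrow> real) \<Rightarrow> real" where
  "shannon A q = - (\<Sum>x\<in>A. q x * log 2 (q x))"

definition deterministic_state :: "'a set \<Rightarrow> ('a \<Rightarrow> real) \<Rightarrow> bool" where
  "deterministic_state X \<sigma> \<longleftrightarrow> (\<forall>x\<in>X. \<sigma> x \<ge> 0) \<and> (\<Sum>x\<in>X. \<sigma> x) = 1"

definition pairing :: "'a set \<Rightarrow> ('a \<Rightarrow> real) \<Rightarrow> ('a \<Rightarrow> real) \<Rightarrow> real" where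
  "pairing X a \<sigma> = (\<Sum>x\<in>X. a x * \<sigma> x)"

definition obs_test :: "'a set \<Rightarrow> nat set \<Rightarrow> (nat \<Rightarrow> 'a \<Rightarrow> real) \<Rightarrow> bool" where
  "obs_test X J a \<longleftrightarrow> finite J \<and> (\<forall>j\<in>J. \<forall>x\<in>X. a j x \<ge> 0)
      \<and> (\<forall>x\<in>X. (\<Sum>j\<in>J. a j x) = 1)"

definition atomic_event :: "'a set \<Rightarrow> ('a \<Rightarrow> real) \<Rightarrow> bool" where
  "atomic_event X e \<longleftrightarrow>
     (\<forall>J b K. obs_test X J b \<and> K \<subseteq> J \<and> (\<forall>x\<in>X. (\<Sum>k\<in>K. b k x) = e x)
        \<longrightarrow> (\<forall>k\<in>K. \<exists>c::real. \<forall>x\<in>X. b k x = c * e x))"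

definition atomic_obs_test :: "'a set \<Rightarrow> nat set \<Rightarrow> (nat \<Rightarrow> 'a \<Rightarrow> real) \<Rightarrow> bool" where
  "atomic_obs_test X J a \<longleftrightarrow> obs_test X J a \<and> (\<forall>j\<in>J. atomic_event X (a j))"

text \<open>Decomposition sigma = sum over i in I of p i * |phi i) into (normalized) pure states.\<close>
definition pure_decomp ::
  "'a set \<Rightarrow> ('a \<Rightarrow> real) \<Rightarrow> nat set \<Rightarrow> (nat \<Rightarrow> real) \<Rightarrow> (nat \<Rightarrow> 'a) \<Rightarrow> bool" where
  "pure_decomp X \<sigma> I p \<phi> \<longleftrightarrow> finite I \<and> (\<forall>i\<in>I. p i \<ge> 0 \<and> \<phi> i \<in> X)
      \<and> (\<Sum>i\<in>I. p i) = 1 \<and> (\<forall>x\<in>X. \<sigma> x = (\<Sum>i\<in>{i\<in>I. \<phi> i = x}. p i))"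

text \<open>Mutual information H(I:J) for q(i,j) = p i * (a j | phi i) = p i * a j (phi i).\<close>
definition mutual_info ::
  "nat set \<Rightarrow> (nat \<Rightarrow> real) \<Rightarrow> (nat \<Rightarrow> 'a) \<Rightarrow> nat set \<Rightarrow> (nat \<Rightarrow> 'a \<Rightarrow> real) \<Rightarrow> real" where
  "mutual_info I p \<phi> J a =
     shannon I p + shannon J (\<lambda>j. \<Sum>i\<in>I. p i * a j (\<phi> i))
     - shannon (I \<times> J) (\<lambda>(i, j). p i * a j (\<phi> i))"

definition S1 :: "'a set \<Rightarrow> ('a \<Rightarrow> real) \<Rightarrow> real" where
  "S1 X \<sigma> = Inf {shannon J (\<lambda>j. pairing X (a j) \<sigma>) | J a. atomic_obs_test X J a}"

definition S2 :: "'a set \<Rightarrow> ('a \<Rightarrow> real) \<Rightarrow> real" where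
  "S2 X \<sigma> = Sup {mutual_info I p \<phi> J a | I p \<phi> J a.
                    pure_decomp X \<sigma> I p \<phi> \<and> atomic_obs_test X J a}"

definition S3 :: "'a set \<Rightarrow> ('a \<Rightarrow> real) \<Rightarrow> real" where
  "S3 X \<sigma> = Inf {shannon I p | I p \<phi>. pure_decomp X \<sigma> I p \<phi>}"

definition S :: "nat \<Rightarrow> 'a set \<Rightarrow> ('a \<Rightarrow> real) \<Rightarrow> real" where
  "S k = (if k = 1 then S1 else if k = 2 then S2 else S3)"

text \<open>The system A^{boxtimes N} (A of size D): pure states |i_s) labelled by
i in {0..<D}^N (a list of length N) and s in {+,-}^(N-1) (a bool list of length N-1).\<close>
definition bct_power_carrier :: "nat \<Rightarrow> nat \<Rightarrow> (nat list \<times> bool list) set" where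
  "bct_power_carrier D N =
     {(is, ss). length is = N \<and> set is \<subseteq> {..<D} \<and> length ss = N - 1}"

definition bct_power :: "(nat \<Rightarrow> real) \<Rightarrow> nat \<Rightarrow> (nat list \<times> bool list) \<Rightarrow> real" where
  "bct_power p N = (\<lambda>(is, ss). prod_list (map p is) * (1/2) ^ (N - 1))"

definition S_reg :: "nat \<Rightarrow> nat \<Rightarrow> (nat \<Rightarrow> real) \<Rightarrow> ereal" where
  "S_reg k D p = limsup (\<lambda>N. ereal (S k (bct_power_carrier D N) (bct_power p N) / real N))"

end

theory Submission
  imports Defs
begin

text \<open>In a classical theory every atomic effect is supported on a single pure state. Hence for an
  atomic test the outcome entropy is H(J) = H(X) + H(J|X) \<ge> H(X), with equality for the sharp
  test; grouping a pure decomposition by pure states shows H(I) \<ge> H(X), with equality for the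
  standard decomposition; and H(I,J) = H(I) + H(J|X), so that H(I:J) = H(X) for every pair.
  Thus S1, S2 and S3 all equal the Shannon entropy of the state. The state of A^N is the
  product distribution p^N times the uniform distribution on 2^(N-1) sign strings, so its
  entropy is N H(p) + N - 1, and dividing by N gives H(p) + 1 in the limit.\<close>

definition plogp :: "real \<Rightarrow> real" where
  "plogp x = x * log 2 x"

lemma shannon_eq_neg_sum_plogp: "shannon A q = - (\<Sum>x\<in>A. plogp (q x))"
  by (simp add: shannon_def plogp_def)

lemma plogp_0 [simp]: "plogp 0 = 0"
  and plogp_1 [simp]: "plogp 1 = 0"
  by (simp_all add: plogp_def)

lemma plogp_mult:
  assumes "0 \<le> a" "0 \<le> b"
  shows "plogp (a * b) = b * plogp a + a * plogp b"
proof (cases "a = 0 \<or> b = 0")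
  case False
  with assms show ?thesis by (simp add: plogp_def log_mult algebra_simps)
qed auto

lemma plogp_nonpos:
  assumes "0 \<le> x" "x \<le> 1"
  shows "plogp x \<le> 0"
  using assms by (cases "x = 0") (auto simp: plogp_def mult_nonneg_nonpos)

lemma plogp_le_mult_log:
  assumes "0 \<le> x" "x \<le> y"
  shows "plogp x \<le> x * log 2 y"
  using assms by (cases "x = 0") (auto simp: plogp_def intro!: mult_left_mono)

lemma sum_plogp_mult:
  assumes "\<forall>x\<in>A. 0 \<le> f x" "\<forall>y\<in>B. 0 \<le> g y"
  shows "(\<Sum>x\<in>A. \<Sum>y\<in>B. plogp (f x * g y))
           = sum g B * (\<Sum>x\<in>A. plogp (f x)) + sum f A * (\<Sum>y\<in>B. plogp (g y))"
proof -
  have "(\<Sum>x\<in>A. \<Sum>y\<in>B. plogp (f x * g y)) = (\<Sum>x\<in>A. \<Sum>y\<in>B. g y * plogp (f x) + f x * plogp (g y))"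
    using assms by (intro sum.cong refl plogp_mult) auto
  also have "\<dots> = (\<Sum>x\<in>A. sum g B * plogp (f x)) + (\<Sum>x\<in>A. f x * (\<Sum>y\<in>B. plogp (g y)))"
    by (simp add: sum.distrib sum_distrib_left[symmetric] sum_distrib_right[symmetric])
  finally show ?thesis
    by (simp add: sum_distrib_left[symmetric] sum_distrib_right[symmetric])
qed

lemma shannon_nonneg:
  assumes "\<forall>x\<in>A. 0 \<le> q x \<and> q x \<le> 1"
  shows "0 \<le> shannon A q"
  using assms by (auto simp: shannon_eq_neg_sum_plogp intro!: sum_nonpos plogp_nonpos)

section \<open>Atomic effects of classical systems\<close>

lemma obs_test_le_1:
  assumes "obs_test X J a" "j \<in> J" "x \<in> X"
  shows "a j x \<le> 1"
proof -
  have "a j x \<le> (\<Sum>j\<in>J. a j x)"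
    using assms by (intro member_le_sum) (auto simp: obs_test_def)
  with assms show ?thesis by (simp add: obs_test_def)
qed

text \<open>Splitting an event e into its value at y and the rest refines it within the test
  consisting of these two parts and 1 - e; atomicity makes the part at y a multiple of e.\<close>

lemma atomic_event_zero_at_one_of_two:
  assumes test: "obs_test X J a" and j: "j \<in> J" and atomic: "atomic_event X (a j)"
    and "y \<in> X" "z \<in> X" "y \<noteq> z"
  shows "a j y = 0 \<or> a j z = 0"
proof (rule ccontr)
  assume nonzero: "\<not> (a j y = 0 \<or> a j z = 0)"
  define b :: "nat \<Rightarrow> _ \<Rightarrow> real" where
    "b = (\<lambda>k w. if k = 0 then (if w = y then a j w else 0)
                else if k = 1 then (if w = y then 0 else a j w) else 1 - a j w)"
  have "obs_test X {0, 1, 2} b"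
    using test j obs_test_le_1[OF test j] by (simp add: obs_test_def b_def)
  moreover have "\<forall>x\<in>X. (\<Sum>k\<in>{0, 1}. b k x) = a j x"
    by (simp add: b_def)
  ultimately obtain c where c: "\<forall>x\<in>X. b 0 x = c * a j x"
    using atomic unfolding atomic_event_def by blast
  with \<open>z \<in> X\<close> \<open>y \<noteq> z\<close> nonzero have "c = 0"
    by (auto simp: b_def)
  with c \<open>y \<in> X\<close> nonzero show False
    by (auto simp: b_def)
qed

lemma atomic_event_point_support:
  assumes "obs_test X J a" "j \<in> J" "atomic_event X (a j)" "X \<noteq> {}"
  obtains x where "x \<in> X" "\<forall>y\<in>X. y \<noteq> x \<longrightarrow> a j y = 0"
proof (cases "\<exists>x\<in>X. a j x \<noteq> 0")
  case True
  then obtain x where "x \<in> X" "a j x \<noteq> 0" by blast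
  with atomic_event_zero_at_one_of_two[OF assms(1-3)] show thesis
    by (metis that)
next
  case False
  with \<open>X \<noteq> {}\<close> show thesis
    using that by blast
qed

lemma atomic_event_indicator:
  assumes "x \<in> X"
  shows "atomic_event X (\<lambda>w. if w = x then 1 else 0)"
  unfolding atomic_event_def
proof (intro allI impI ballI)
  fix J b K k
  assume refines: "obs_test X J b \<and> K \<subseteq> J \<and> (\<forall>w\<in>X. (\<Sum>k\<in>K. b k w) = (if w = x then 1 else 0))"
    and "k \<in> K"
  have "b k w = 0" if "w \<in> X" "w \<noteq> x" for w
  proof -
    have "finite K" "\<forall>k\<in>K. 0 \<le> b k w"
      using refines \<open>w \<in> X\<close> finite_subset unfolding obs_test_def by blast+
    moreover have "(\<Sum>k\<in>K. b k w) = 0"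
      using refines that by simp
    ultimately show ?thesis
      using \<open>k \<in> K\<close> by (simp add: sum_nonneg_eq_0_iff)
  qed
  then show "\<exists>c. \<forall>w\<in>X. b k w = c * (if w = x then 1 else 0)"
    by (intro exI[of _ "b k x"]) auto
qed

section \<open>Entropies of classical states\<close>

lemma pure_decomp_sum:
  assumes decomp: "pure_decomp X \<sigma> I p \<phi>" and "finite X"
  shows "(\<Sum>i\<in>I. p i * G (\<phi> i)) = (\<Sum>x\<in>X. \<sigma> x * G x)"
proof -
  have "finite I" "\<phi> ` I \<subseteq> X"
    using decomp unfolding pure_decomp_def by auto
  then have "(\<Sum>i\<in>I. p i * G (\<phi> i)) = (\<Sum>x\<in>X. \<Sum>i\<in>{i\<in>I. \<phi> i = x}. p i * G x)"
    using \<open>finite X\<close> by (simp add: sum.group[symmetric])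
  also have "\<dots> = (\<Sum>x\<in>X. \<sigma> x * G x)"
    using decomp by (simp add: pure_decomp_def sum_distrib_right)
  finally show ?thesis .
qed

lemma pairing_point_effect:
  assumes "finite X" "x \<in> X" "\<forall>y\<in>X. y \<noteq> x \<longrightarrow> e y = 0"
  shows "pairing X e \<sigma> = e x * \<sigma> x"
  using assms unfolding pairing_def by (subst sum.mono_neutral_right[of X "{x}"]) auto

lemma plogp_pairing_point_effect:
  assumes "finite X" "x \<in> X" "\<forall>y\<in>X. y \<noteq> x \<longrightarrow> e y = 0"
    and "\<forall>y\<in>X. 0 \<le> e y" "\<forall>y\<in>X. 0 \<le> \<sigma> y"
  shows "plogp (pairing X e \<sigma>) = (\<Sum>y\<in>X. \<sigma> y * plogp (e y) + e y * plogp (\<sigma> y))"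
proof -
  have "(\<Sum>y\<in>X. \<sigma> y * plogp (e y) + e y * plogp (\<sigma> y)) = \<sigma> x * plogp (e x) + e x * plogp (\<sigma> x)"
    using assms(1-3) by (subst sum.mono_neutral_right[of X "{x}"]) auto
  with assms show ?thesis
    by (simp add: pairing_point_effect plogp_mult)
qed

definition test_cond_entropy :: "'a set \<Rightarrow> ('a \<Rightarrow> real) \<Rightarrow> nat set \<Rightarrow> (nat \<Rightarrow> 'a \<Rightarrow> real) \<Rightarrow> real"
  where "test_cond_entropy X \<sigma> J a = (\<Sum>x\<in>X. \<sigma> x * shannon J (\<lambda>j. a j x))"

lemma test_cond_entropy_eq:
  "test_cond_entropy X \<sigma> J a = - (\<Sum>j\<in>J. \<Sum>x\<in>X. \<sigma> x * plogp (a j x))"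
  unfolding test_cond_entropy_def shannon_eq_neg_sum_plogp
  by (simp add: sum_distrib_left sum_negf sum.swap[of _ J])

lemma test_cond_entropy_nonneg:
  assumes "obs_test X J a" "deterministic_state X \<sigma>"
  shows "0 \<le> test_cond_entropy X \<sigma> J a"
  unfolding test_cond_entropy_def
  using assms obs_test_le_1[OF assms(1)]
  by (intro sum_nonneg mult_nonneg_nonneg shannon_nonneg)
     (auto simp: deterministic_state_def obs_test_def)

text \<open>Since an atomic test reveals the pure state, H(J) = H(X) + H(J|X).\<close>

lemma shannon_atomic_outcomes:
  assumes "finite X" "atomic_obs_test X J a" "deterministic_state X \<sigma>"
  shows "shannon J (\<lambda>j. pairing X (a j) \<sigma>) = shannon X \<sigma> + test_cond_entropy X \<sigma> J a"
proof -
  have test: "obs_test X J a" and atomic: "\<forall>j\<in>J. atomic_event X (a j)"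
    using assms(2) by (auto simp: atomic_obs_test_def)
  have "X \<noteq> {}" "\<forall>y\<in>X. 0 \<le> \<sigma> y"
    using assms(3) by (auto simp: deterministic_state_def)
  have "plogp (pairing X (a j) \<sigma>) = (\<Sum>y\<in>X. \<sigma> y * plogp (a j y) + a j y * plogp (\<sigma> y))"
    if "j \<in> J" for j
  proof -
    obtain x where "x \<in> X" "\<forall>y\<in>X. y \<noteq> x \<longrightarrow> a j y = 0"
      using atomic_event_point_support[OF test \<open>j \<in> J\<close>] atomic \<open>j \<in> J\<close> \<open>X \<noteq> {}\<close> by blast
    then show ?thesis
      using test \<open>j \<in> J\<close> \<open>finite X\<close> \<open>\<forall>y\<in>X. 0 \<le> \<sigma> y\<close>
      by (intro plogp_pairing_point_effect) (auto simp: obs_test_def)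
  qed
  then have "(\<Sum>j\<in>J. plogp (pairing X (a j) \<sigma>))
      = (\<Sum>j\<in>J. \<Sum>y\<in>X. \<sigma> y * plogp (a j y)) + (\<Sum>y\<in>X. (\<Sum>j\<in>J. a j y) * plogp (\<sigma> y))"
    by (simp add: sum.distrib sum_distrib_right sum.swap[of _ X])
  also have "\<dots> = (\<Sum>j\<in>J. \<Sum>y\<in>X. \<sigma> y * plogp (a j y)) + (\<Sum>y\<in>X. plogp (\<sigma> y))"
    using test by (simp add: obs_test_def)
  finally show ?thesis
    by (simp add: shannon_eq_neg_sum_plogp test_cond_entropy_eq)
qed

text \<open>H(I,J) = H(I) + H(J|I), and H(J|I) = H(J|X) because the outcome depends on i only
  through the pure state.\<close>

lemma shannon_joint_outcomes:
  assumes "finite X" "pure_decomp X \<sigma> I p \<phi>" "obs_test X J a"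
  shows "shannon (I \<times> J) (\<lambda>(i, j). p i * a j (\<phi> i)) = shannon I p + test_cond_entropy X \<sigma> J a"
proof -
  have "\<forall>i\<in>I. 0 \<le> p i \<and> \<phi> i \<in> X" "\<forall>i\<in>I. \<forall>j\<in>J. 0 \<le> a j (\<phi> i)" "\<forall>i\<in>I. (\<Sum>j\<in>J. a j (\<phi> i)) = 1"
    using assms(2,3) by (auto simp: pure_decomp_def obs_test_def)
  then have "(\<Sum>i\<in>I. \<Sum>j\<in>J. plogp (p i * a j (\<phi> i)))
      = (\<Sum>i\<in>I. plogp (p i)) + (\<Sum>j\<in>J. \<Sum>i\<in>I. p i * plogp (a j (\<phi> i)))"
    by (simp add: plogp_mult sum.distrib sum_distrib_right[symmetric] sum.swap[of _ J])
  also have "\<dots> = (\<Sum>i\<in>I. plogp (p i)) + (\<Sum>j\<in>J. \<Sum>x\<in>X. \<sigma> x * plogp (a j x))"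
    using pure_decomp_sum[OF assms(2,1), of "\<lambda>x. plogp (a j x)" for j] by simp
  finally show ?thesis
    by (simp add: shannon_eq_neg_sum_plogp test_cond_entropy_eq sum.cartesian_product case_prod_beta)
qed

lemma exists_indicator_test:
  assumes "finite X"
  obtains J a where "atomic_obs_test X J a" "\<forall>j\<in>J. \<forall>x\<in>X. a j x = 0 \<or> a j x = 1"
proof -
  obtain f where f: "bij_betw f {0..<card X} X"
    using ex_bij_betw_nat_finite[OF assms] by blast
  define a :: "nat \<Rightarrow> _ \<Rightarrow> real" where "a j w = (if w = f j then 1 else 0)" for j w
  have "obs_test X {0..<card X} a"
    unfolding obs_test_def
  proof (intro conjI ballI)
    fix w assume "w \<in> X"
    have "(\<Sum>j\<in>{0..<card X}. a j w) = (\<Sum>x\<in>X. if w = x then 1 else 0)"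
      unfolding a_def by (rule sum.reindex_bij_betw[OF f])
    with \<open>w \<in> X\<close> \<open>finite X\<close> show "(\<Sum>j\<in>{0..<card X}. a j w) = 1"
      by simp
  qed (simp_all add: a_def)
  moreover have "atomic_event X (a j)" if "j \<in> {0..<card X}" for j
    unfolding a_def using that by (intro atomic_event_indicator bij_betw_apply[OF f])
  ultimately have "atomic_obs_test X {0..<card X} a"
    by (simp add: atomic_obs_test_def)
  then show thesis
    by (rule that) (simp add: a_def)
qed

lemma exists_pure_decomp_shannon:
  assumes "finite X" "deterministic_state X \<sigma>"
  obtains I p \<phi> where "pure_decomp X \<sigma> I p \<phi>" "shannon I p = shannon X \<sigma>"
proof -
  obtain f where f: "bij_betw f {0..<card X} X"
    using ex_bij_betw_nat_finite[OF assms(1)] by blast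
  have reindex: "(\<Sum>i\<in>{0..<card X}. g (f i)) = (\<Sum>x\<in>X. g x)" for g :: "_ \<Rightarrow> real"
    by (rule sum.reindex_bij_betw[OF f])
  have "pure_decomp X \<sigma> {0..<card X} (\<lambda>i. \<sigma> (f i)) f"
    unfolding pure_decomp_def
  proof (intro conjI ballI)
    fix x assume "x \<in> X"
    have "(\<Sum>i\<in>{i\<in>{0..<card X}. f i = x}. \<sigma> (f i))
        = (\<Sum>i\<in>{0..<card X}. if f i = x then \<sigma> (f i) else 0)"
      by (rule sum.inter_filter) simp
    also have "\<dots> = \<sigma> x"
      using \<open>x \<in> X\<close> \<open>finite X\<close> by (simp add: reindex[of "\<lambda>y. if y = x then \<sigma> y else 0"])
    finally show "\<sigma> x = (\<Sum>i\<in>{i\<in>{0..<card X}. f i = x}. \<sigma> (f i))" ..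
  next
    fix i assume "i \<in> {0..<card X}"
    then show "0 \<le> \<sigma> (f i)" "f i \<in> X"
      using assms(2) bij_betw_apply[OF f] by (auto simp: deterministic_state_def)
  next
    show "(\<Sum>i\<in>{0..<card X}. \<sigma> (f i)) = 1"
      using assms(2) reindex[of \<sigma>] by (simp add: deterministic_state_def)
  qed simp
  moreover have "shannon {0..<card X} (\<lambda>i. \<sigma> (f i)) = shannon X \<sigma>"
    unfolding shannon_eq_neg_sum_plogp using reindex[of "\<lambda>x. plogp (\<sigma> x)"] by simp
  ultimately show thesis
    by (rule that)
qed

lemma S1_eq_shannon:
  assumes "finite X" "deterministic_state X \<sigma>"
  shows "S1 X \<sigma> = shannon X \<sigma>"
  unfolding S1_def
proof (rule cInf_eq_minimum)
  obtain J a where "atomic_obs_test X J a" "\<forall>j\<in>J. \<forall>x\<in>X. a j x = 0 \<or> a j x = 1"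
    using exists_indicator_test[OF assms(1)] .
  moreover from this(2) have "\<forall>j\<in>J. \<forall>x\<in>X. plogp (a j x) = 0"
    by (metis plogp_0 plogp_1)
  then have "test_cond_entropy X \<sigma> J a = 0"
    by (simp add: test_cond_entropy_eq)
  ultimately have "shannon J (\<lambda>j. pairing X (a j) \<sigma>) = shannon X \<sigma>"
    using shannon_atomic_outcomes[OF assms(1) _ assms(2)] by simp
  with \<open>atomic_obs_test X J a\<close>
  show "shannon X \<sigma> \<in> {shannon J (\<lambda>j. pairing X (a j) \<sigma>) | J a. atomic_obs_test X J a}"
    by force
next
  fix u assume "u \<in> {shannon J (\<lambda>j. pairing X (a j) \<sigma>) | J a. atomic_obs_test X J a}"
  then obtain J a where "u = shannon J (\<lambda>j. pairing X (a j) \<sigma>)" "atomic_obs_test X J a"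
    by blast
  then show "shannon X \<sigma> \<le> u"
    using shannon_atomic_outcomes[OF assms(1) _ assms(2)] test_cond_entropy_nonneg[OF _ assms(2)]
    by (simp add: atomic_obs_test_def)
qed

text \<open>Grouping: p i is at most the weight of its pure state, so H(I) \<ge> H(X).\<close>

lemma S3_eq_shannon:
  assumes "finite X" "deterministic_state X \<sigma>"
  shows "S3 X \<sigma> = shannon X \<sigma>"
  unfolding S3_def
proof (rule cInf_eq_minimum)
  obtain I p \<phi> where "pure_decomp X \<sigma> I p \<phi>" "shannon I p = shannon X \<sigma>"
    using exists_pure_decomp_shannon[OF assms] .
  then show "shannon X \<sigma> \<in> {shannon I p | I p \<phi>. pure_decomp X \<sigma> I p \<phi>}"
    by force
next
  fix u assume "u \<in> {shannon I p | I p \<phi>. pure_decomp X \<sigma> I p \<phi>}"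
  then obtain I p \<phi> where u: "u = shannon I p" and decomp: "pure_decomp X \<sigma> I p \<phi>"
    by blast
  have "p i \<le> \<sigma> (\<phi> i)" if "i \<in> I" for i
  proof -
    have "p i \<le> (\<Sum>i'\<in>{i'\<in>I. \<phi> i' = \<phi> i}. p i')"
      using decomp that by (intro member_le_sum) (auto simp: pure_decomp_def)
    with decomp that show ?thesis
      by (simp add: pure_decomp_def)
  qed
  then have "(\<Sum>i\<in>I. plogp (p i)) \<le> (\<Sum>i\<in>I. p i * log 2 (\<sigma> (\<phi> i)))"
    using decomp by (intro sum_mono plogp_le_mult_log) (auto simp: pure_decomp_def)
  also have "\<dots> = (\<Sum>x\<in>X. plogp (\<sigma> x))"
    using pure_decomp_sum[OF decomp assms(1)] by (simp add: plogp_def)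
  finally show "shannon X \<sigma> \<le> u"
    by (simp add: u shannon_eq_neg_sum_plogp)
qed

lemma mutual_info_eq_shannon:
  assumes "finite X" "deterministic_state X \<sigma>" "pure_decomp X \<sigma> I p \<phi>" "atomic_obs_test X J a"
  shows "mutual_info I p \<phi> J a = shannon X \<sigma>"
proof -
  have "(\<Sum>i\<in>I. p i * a j (\<phi> i)) = pairing X (a j) \<sigma>" for j
    using pure_decomp_sum[OF assms(3,1)] by (simp add: pairing_def mult.commute)
  moreover have "obs_test X J a"
    using assms(4) by (simp add: atomic_obs_test_def)
  ultimately show ?thesis
    using shannon_atomic_outcomes[OF assms(1,4,2)] shannon_joint_outcomes[OF assms(1,3)]
    by (simp add: mutual_info_def)
qed

lemma S2_eq_shannon:
  assumes "finite X" "deterministic_state X \<sigma>"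
  shows "S2 X \<sigma> = shannon X \<sigma>"
proof -
  obtain J a where "atomic_obs_test X J a"
    using exists_indicator_test[OF assms(1)] .
  moreover obtain I p \<phi> where "pure_decomp X \<sigma> I p \<phi>"
    using exists_pure_decomp_shannon[OF assms] .
  ultimately have "{mutual_info I p \<phi> J a | I p \<phi> J a. pure_decomp X \<sigma> I p \<phi> \<and> atomic_obs_test X J a}
      = {shannon X \<sigma>}"
    using mutual_info_eq_shannon[OF assms] by auto metis
  then show ?thesis
    by (simp add: S2_def)
qed

lemma S_eq_shannon:
  assumes "finite X" "deterministic_state X \<sigma>" "k \<in> {1, 2, 3}"
  shows "S k X \<sigma> = shannon X \<sigma>"
  using assms S1_eq_shannon S2_eq_shannon S3_eq_shannon by (auto simp: S_def)

section \<open>Tensor powers in bilocal classical theory\<close>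

lemma sum_lists_length_Suc:
  "(\<Sum>xs\<in>{xs. set xs \<subseteq> A \<and> length xs = Suc n}. F xs)
     = (\<Sum>x\<in>A. \<Sum>xs\<in>{xs. set xs \<subseteq> A \<and> length xs = n}. F (x # xs))"
proof -
  have "inj_on (\<lambda>(xs, x). x # xs) ({xs. set xs \<subseteq> A \<and> length xs = n} \<times> A)"
    by (auto simp: inj_on_def)
  then have "(\<Sum>xs\<in>{xs. set xs \<subseteq> A \<and> length xs = Suc n}. F xs)
      = (\<Sum>(xs, x)\<in>{xs. set xs \<subseteq> A \<and> length xs = n} \<times> A. F (x # xs))"
    unfolding lists_length_Suc_eq by (simp add: sum.reindex case_prod_unfold)
  then show ?thesis
    by (simp add: sum.cartesian_product[symmetric] sum.swap[of _ A])
qed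

lemma lists_length_0: "{xs. set xs \<subseteq> A \<and> length xs = 0} = {[]}"
  by auto

lemma sum_prod_list_lists:
  fixes p :: "'a \<Rightarrow> 'b::comm_semiring_1"
  shows "(\<Sum>xs\<in>{xs. set xs \<subseteq> A \<and> length xs = n}. prod_list (map p xs)) = sum p A ^ n"
proof (induction n)
  case 0
  show ?case
    unfolding lists_length_0 by simp
qed (simp add: sum_lists_length_Suc sum_distrib_left[symmetric] sum_distrib_right[symmetric])

lemma sum_plogp_prod_list_lists:
  assumes "\<forall>x\<in>A. 0 \<le> p x" "sum p A = 1"
  shows "(\<Sum>xs\<in>{xs. set xs \<subseteq> A \<and> length xs = n}. plogp (prod_list (map p xs)))
           = real n * (\<Sum>x\<in>A. plogp (p x))"
proof (induction n)
  case (Suc n)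
  have "\<forall>xs\<in>{xs. set xs \<subseteq> A \<and> length xs = n}. 0 \<le> prod_list (map p xs)"
    using assms(1) by (force intro!: prod_list_nonneg)
  then show ?case
    using assms Suc.IH
    by (simp add: sum_lists_length_Suc sum_plogp_mult sum_prod_list_lists algebra_simps)
qed (unfold lists_length_0, simp)

lemma card_bool_lists_length: "card {ss :: bool list. length ss = n} = 2 ^ n"
  using card_lists_length_eq[of "UNIV :: bool set" n] by simp

lemma bct_power_carrier_eq:
  "bct_power_carrier D N
     = {xs. set xs \<subseteq> {..<D} \<and> length xs = N} \<times> {ss :: bool list. length ss = N - 1}"
  by (auto simp: bct_power_carrier_def)

lemma finite_bct_power_carrier: "finite (bct_power_carrier D N)"
  using finite_lists_length_eq[of "{..<D}" N] finite_lists_length_eq[of "UNIV :: bool set" "N - 1"]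
  by (simp add: bct_power_carrier_eq)

lemma sum_bct_power:
  "(\<Sum>z\<in>bct_power_carrier D N. G (bct_power p N z))
     = (\<Sum>xs\<in>{xs. set xs \<subseteq> {..<D} \<and> length xs = N}. \<Sum>ss\<in>{ss :: bool list. length ss = N - 1}.
          G (prod_list (map p xs) * (1 / 2) ^ (N - 1)))"
  by (simp add: bct_power_carrier_eq sum.cartesian_product bct_power_def case_prod_unfold)

lemma sum_uniform_signs: "(\<Sum>ss\<in>{ss :: bool list. length ss = n}. (1 / 2 :: real) ^ n) = 1"
  by (simp add: card_bool_lists_length power_one_over)

lemma sum_plogp_uniform_signs:
  "(\<Sum>ss\<in>{ss :: bool list. length ss = n}. plogp ((1 / 2) ^ n)) = - real n"
proof -
  have "log 2 ((1 / 2) ^ n) = - real n"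
    by (simp add: log_nat_power log_divide)
  then show ?thesis
    by (simp add: card_bool_lists_length plogp_def power_one_over)
qed

lemma deterministic_state_bct_power:
  assumes "deterministic_state {..<D} p"
  shows "deterministic_state (bct_power_carrier D N) (bct_power p N)"
proof -
  have p: "\<forall>x<D. 0 \<le> p x" "sum p {..<D} = 1"
    using assms by (auto simp: deterministic_state_def)
  have "(\<Sum>z\<in>bct_power_carrier D N. bct_power p N z)
      = (\<Sum>xs\<in>{xs. set xs \<subseteq> {..<D} \<and> length xs = N}.
           prod_list (map p xs) * (\<Sum>ss\<in>{ss :: bool list. length ss = N - 1}. (1 / 2) ^ (N - 1)))"
    using sum_bct_power[of id] by (simp add: sum_distrib_left mult_ac)
  also have "\<dots> = 1"
    using p by (simp only: sum_uniform_signs mult_1_right sum_prod_list_lists) simp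
  moreover have "0 \<le> bct_power p N z" if "z \<in> bct_power_carrier D N" for z
  proof -
    have "0 \<le> prod_list (map p (fst z))"
      using that p(1) by (intro prod_list_nonneg) (auto simp: bct_power_carrier_def)
    then show ?thesis
      by (simp add: bct_power_def case_prod_unfold)
  qed
  ultimately show ?thesis
    by (simp add: deterministic_state_def)
qed

lemma shannon_bct_power:
  assumes "deterministic_state {..<D} p"
  shows "shannon (bct_power_carrier D N) (bct_power p N) = real N * shannon {..<D} p + real (N - 1)"
proof -
  let ?L = "{xs. set xs \<subseteq> {..<D} \<and> length xs = N}" and ?B = "{ss :: bool list. length ss = N - 1}"
  let ?w = "(1 / 2 :: real) ^ (N - 1)"
  have p: "\<forall>x\<in>{..<D}. 0 \<le> p x" "sum p {..<D} = 1"
    using assms by (auto simp: deterministic_state_def)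
  have "\<forall>xs\<in>?L. 0 \<le> prod_list (map p xs)"
    using p(1) by (force intro!: prod_list_nonneg)
  then have "(\<Sum>xs\<in>?L. \<Sum>ss\<in>?B. plogp (prod_list (map p xs) * ?w))
      = (\<Sum>ss\<in>?B. ?w) * (\<Sum>xs\<in>?L. plogp (prod_list (map p xs)))
        + (\<Sum>xs\<in>?L. prod_list (map p xs)) * (\<Sum>ss\<in>?B. plogp ?w)"
    by (intro sum_plogp_mult) auto
  also have "\<dots> = real N * (\<Sum>x\<in>{..<D}. plogp (p x)) - real (N - 1)"
    using p by (simp only: sum_uniform_signs sum_plogp_uniform_signs sum_prod_list_lists
        sum_plogp_prod_list_lists) simp
  finally show ?thesis
    by (simp add: shannon_eq_neg_sum_plogp sum_bct_power[of plogp])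
qed

lemma entropy_rate_tendsto:
  "(\<lambda>N. (real N * h + real (N - 1)) / real N) \<longlonglongrightarrow> h + 1"
proof -
  have "\<forall>\<^sub>F N in sequentially. h + 1 - 1 / real N = (real N * h + real (N - 1)) / real N"
    by (intro eventually_sequentiallyI[of 1]) (simp add: of_nat_diff field_simps)
  moreover have "(\<lambda>N. h + 1 - 1 / real N) \<longlonglongrightarrow> h + 1 - 0"
    by (intro tendsto_diff tendsto_const lim_1_over_n)
  ultimately show ?thesis
    using tendsto_cong by force
qed

theorem proposition4:
  fixes D :: nat and p :: "nat \<Rightarrow> real" and k :: nat
  assumes "D > 1"
    and "deterministic_state {..<D} p"
    and "k \<in> {1, 2, 3}"
  shows "S_reg k D p = ereal (S k {..<D} p + 1)
       \<and> S k {..<D} p + 1 = shannon {..<D} p + 1"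
proof -
  let ?H = "shannon {..<D} p"
  have "S k {..<D} p = ?H"
    using S_eq_shannon[OF finite_lessThan assms(2,3)] .
  moreover have "S k (bct_power_carrier D N) (bct_power p N) = real N * ?H + real (N - 1)" for N
    using S_eq_shannon[OF finite_bct_power_carrier deterministic_state_bct_power[OF assms(2)] assms(3)]
      shannon_bct_power[OF assms(2)] by simp
  then have "(\<lambda>N. ereal (S k (bct_power_carrier D N) (bct_power p N) / real N)) \<longlonglongrightarrow> ereal (?H + 1)"
    using entropy_rate_tendsto by simp
  then have "S_reg k D p = ereal (?H + 1)"
    unfolding S_reg_def by (intro lim_imp_Limsup) simp_all
  ultimately show ?thesis
    by simp
qed

end
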